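(* Let $X_1,\dots,X_N$ ($N\ge2$) be independent random variables with finite means. Let $S=\bigcup_{i=1}^N S_i$ be a set of samples where $S_i$ consists of i.i.d. samples of $X_i$, and let $S$ be randomly divided into two subsets $S^A$ and $S^B$, with $S_i^A=S_i\cap S^A$, $S_i^B=S_i\cap S^B$ nonempty. Define the sample averages $\hat\mu_i=\frac{1}{|S_i|}\sum_{s\in S_i}s$, $\hat\mu_i^A=\frac{1}{|S_i^A|}\sum_{s\in S_i^A}s$, $\hat\mu_i^B=\frac{1}{|S_i^B|}\sum_{s\in S_i^B}s$, and the single estimator $\hat\mu^*_{SE}=\max_i\hat\mu_i$. For $1\le K\le N$, let $\mathcal{M}_K$ be the set of indices of the $K$ largest values in $(\hat\mu^B_1,\dots,\hat\mu^B_N)$, and let $a_K^*$ be an index with $\hat\mu^A_{a_K^*}=\max_{i\in\mathcal{M}_K}\hat\mu^A_i$ (ties broken at random). Let $a^*$ be an index with $\hat\mu^A_{a^*}=\max_i\hat\mu^A_i$, and define the clipped double estimator $\hat\mu^*_{CDE}=\min\{\hat\mu^B_{a^*},\hat\mu^*_{SE}\}$. Assume that the values in $(\hat\mu^A_i)_i$ and in $(\hat\mu^B_i)_i$ are different. Then for $1\le K<N$, $$\mathbb{E}\left[\min\{\hat\mu^B_{a_K^*},\hat\mu^*_{SE}\}\right]\ \ge\ \mathbb{E}\left[\min\{\hat\mu^B_{a_{K+1}^*},\hat\mu^*_{SE}\}\right],$$ where the inequality is strict if and only if $P(\hat\mu^*_{SE}>\hat\mu^B_{a_K^*}>\hat\mu^B_{a_{K+1}^*})>0$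 or $P(\hat\mu^B_{a_K^*}\ge\hat\mu^*_{SE}>\hat\mu^B_{a_{K+1}^*})>0$. Moreover, for all $1\le K\le N$, $\mathbb{E}\left[\min\{\hat\mu^B_{a_K^*},\hat\mu^*_{SE}\}\right]\ge\mathbb{E}\left[\hat\mu^*_{CDE}\right]$.
   Context: The quantity $\min\{\hat\mu^B_{a_K^*},\hat\mu^*_{SE}\}$ is called the action candidate based clipped double estimator of $\max_i\mathbb{E}[X_i]$; $\mathcal{M}_K$ is the set of "action candidates". *)

theory Defs
  imports "HOL-Probability.Probability"
begin

definition avg :: "nat set \<Rightarrow> (nat \<Rightarrow> real) \<Rightarrow> real" where
  "avg A f = (\<Sum>j\<in>A. f j) / real (card A)"

text \<open>When the values are
  pairwise distinct this is exactly the set of the K largest values.\<close>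
definition topK :: "nat \<Rightarrow> nat \<Rightarrow> (nat \<Rightarrow> real) \<Rightarrow> nat set" where
  "topK N K f = {i. i < N \<and> card {j. j < N \<and> f i < f j} < K}"

end

theory Submission
  imports Defs
begin

text \<open>
  Everything happens pathwise. Passing from the K to the L \<ge> K largest B-averages, the
  A-arg-max over the candidates either stays put or moves to a newly admitted index, whose
  B-average is below that of every old candidate. Hence muB (a K) is antitone in K, and
  a N = astar because topK N N is the whole index set. Integrating the pointwise inequality
  between the clipped values gives the weak inequalities, and the first one is strict exactly
  when the two clipped values differ on a set of positive measure, which is the union of the
  two events in the statement.
\<close>

lemma topK_subset_lessThan: "topK N K f \<subseteq> {..<N}"
  unfolding topK_def by auto

lemma finite_topK: "finite (topK N K f)"
  using topK_subset_lessThan by (rule finite_subset) simp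

lemma topK_mono: "K \<le> L \<Longrightarrow> topK N K f \<subseteq> topK N L f"
  unfolding topK_def by auto

lemma topK_eq_lessThan:
  assumes "N \<le> K"
  shows "topK N K f = {..<N}"
proof -
  have "card {j. j < N \<and> f i < f j} < K" if "i < N" for i
  proof -
    have "card {j. j < N \<and> f i < f j} \<le> card ({..<N} - {i})" by (intro card_mono) auto
    also have "\<dots> = N - 1" using that by simp
    finally show ?thesis using that assms by linarith
  qed
  then show ?thesis unfolding topK_def by auto
qed

lemma topK_outside_less:
  assumes "i < N" "i \<notin> topK N K f" "j \<in> topK N K f"
  shows "f i < f j"
proof (rule ccontr)
  assume "\<not> f i < f j"
  then have "{l. l < N \<and> f i < f l} \<subseteq> {l. l < N \<and> f j < f l}" by auto
  then have "card {l. l < N \<and> f i < f l} \<le> card {l. l < N \<and> f j < f l}"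
    by (intro card_mono) auto
  with assms show False unfolding topK_def by auto
qed

lemma is_arg_max_Max_iff:
  fixes f :: "'a \<Rightarrow> 'b::linorder"
  assumes "finite S"
  shows "is_arg_max f (\<lambda>x. x \<in> S) x \<longleftrightarrow> x \<in> S \<and> f x = Max (f ` S)"
  using assms by (auto simp: is_arg_max_linorder intro!: Max_eqI[symmetric])

lemma is_arg_max_unique:
  fixes f :: "'a \<Rightarrow> 'b::linorder"
  assumes "inj_on f S" "is_arg_max f (\<lambda>x. x \<in> S) x" "is_arg_max f (\<lambda>x. x \<in> S) y"
  shows "x = y"
  using assms by (auto simp: is_arg_max_linorder intro: antisym dest: inj_onD)

lemma is_arg_max_topK_antimono:
  fixes fA fB :: "nat \<Rightarrow> real"
  assumes inj: "inj_on fA {..<N}" and "K \<le> L"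
    and x: "is_arg_max fA (\<lambda>i. i \<in> topK N K fB) x"
    and y: "is_arg_max fA (\<lambda>i. i \<in> topK N L fB) y"
  shows "fB y \<le> fB x"
proof (cases "y \<in> topK N K fB")
  case True
  have "is_arg_max fA (\<lambda>i. i \<in> topK N K fB) y"
    using True y topK_mono[OF \<open>K \<le> L\<close>] by (auto simp: is_arg_max_linorder)
  moreover have "inj_on fA (topK N K fB)"
    using inj_on_subset[OF inj topK_subset_lessThan] by simp
  ultimately have "y = x" using x is_arg_max_unique by metis
  then show ?thesis by simp
next
  case False
  have "y < N" using y topK_subset_lessThan by (auto simp: is_arg_max_def)
  with False x show ?thesis
    using topK_outside_less by (fastforce simp: is_arg_max_def)
qed

lemma real_card_Collect_lessThan:
  fixes m :: nat
  shows "real (card {j. j < m \<and> P j}) = (\<Sum>j<m. if P j then 1 else 0)"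
proof -
  have "real (card {j\<in>{..<m}. P j}) = (\<Sum>j\<in>{j\<in>{..<m}. P j}. 1)" by simp
  also have "\<dots> = (\<Sum>j<m. if P j then 1 else 0)" by (rule sum.inter_filter) simp
  finally show ?thesis by (simp add: conj_commute)
qed

lemma avg_Collect_lessThan:
  fixes m :: nat
  shows "avg {j. j < m \<and> P j} f = (\<Sum>j<m. if P j then f j else 0) / (\<Sum>j<m. if P j then 1 else 0)"
proof -
  have "(\<Sum>j\<in>{j\<in>{..<m}. P j}. f j) = (\<Sum>j<m. if P j then f j else 0)"
    by (rule sum.inter_filter) simp
  then show ?thesis
    unfolding avg_def real_card_Collect_lessThan[symmetric] by (simp add: conj_commute)
qed

lemma avg_abs_le_sum_abs:
  assumes "finite T" "S \<subseteq> T"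
  shows "\<bar>avg S f\<bar> \<le> (\<Sum>j\<in>T. \<bar>f j\<bar>)"
proof (cases "S = {}")
  case True
  then show ?thesis by (simp add: avg_def sum_nonneg)
next
  case False
  have "finite S" using assms by (rule finite_subset[rotated])
  with False have "real (card S) \<ge> 1" by (simp add: Suc_leI card_gt_0_iff)
  then have "\<bar>avg S f\<bar> \<le> \<bar>sum f S\<bar>"
    unfolding avg_def abs_divide by (simp add: divide_le_eq mult_le_cancel_left1)
  also have "\<dots> \<le> (\<Sum>j\<in>S. \<bar>f j\<bar>)" by (rule sum_abs)
  also have "\<dots> \<le> (\<Sum>j\<in>T. \<bar>f j\<bar>)" using assms by (intro sum_mono2) auto
  finally show ?thesis .
qed

lemma borel_measurable_avg_Collect:
  assumes "\<And>j. j < m \<Longrightarrow> Y j \<in> borel_measurable M"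
    and "\<And>j. j < m \<Longrightarrow> Measurable.pred M (P j)"
  shows "(\<lambda>\<omega>. avg {j. j < m \<and> P j \<omega>} (\<lambda>j. Y j \<omega>)) \<in> borel_measurable M"
  unfolding avg_Collect_lessThan using assms
  by (intro borel_measurable_divide borel_measurable_sum measurable_If) (auto simp: pred_def)

lemma pred_in_topK:
  assumes f: "\<And>i. i < N \<Longrightarrow> f i \<in> borel_measurable M"
  shows "Measurable.pred M (\<lambda>\<omega>. i \<in> topK N K (\<lambda>i. f i \<omega>))"
proof (cases "i < N")
  case True
  have "(\<lambda>\<omega>. \<Sum>j<N. if f i \<omega> < f j \<omega> then 1 else 0 :: real) \<in> borel_measurable M"
    using True f by (intro borel_measurable_sum measurable_If borel_measurable_const) (auto simp: pred_def)
  then have "Measurable.pred M (\<lambda>\<omega>. real (card {j. j < N \<and> f i \<omega> < f j \<omega>}) < real K)"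
    unfolding real_card_Collect_lessThan Measurable.pred_def
    by (rule borel_measurable_less) simp_all
  also have "(\<lambda>\<omega>. real (card {j. j < N \<and> f i \<omega> < f j \<omega>}) < real K) =
      (\<lambda>\<omega>. i \<in> topK N K (\<lambda>i. f i \<omega>))"
    using True by (auto simp: topK_def)
  finally show ?thesis .
qed (simp add: topK_def)

lemma measurable_count_space_by_preds:
  assumes "countable I" and s: "\<And>\<omega>. \<omega> \<in> space M \<Longrightarrow> s \<omega> \<in> I"
    and Q: "\<And>i. i \<in> I \<Longrightarrow> Measurable.pred M (Q i)"
    and Q_iff: "\<And>\<omega> i. \<omega> \<in> space M \<Longrightarrow> i \<in> I \<Longrightarrow> Q i \<omega> \<longleftrightarrow> s \<omega> = i"
  shows "s \<in> measurable M (count_space I)"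
proof -
  have "s -` {i} \<inter> space M = {\<omega>\<in>space M. Q i \<omega>}" if "i \<in> I" for i
    using Q_iff that by auto
  then show ?thesis
    using Q s by (auto simp: measurable_count_space_eq_countable[OF \<open>countable I\<close>] pred_def)
qed

lemma measurable_topK_arg_max:
  fixes fA fB :: "nat \<Rightarrow> 'a \<Rightarrow> real"
  assumes fA: "\<And>i. i < N \<Longrightarrow> fA i \<in> borel_measurable M"
    and fB: "\<And>i. i < N \<Longrightarrow> fB i \<in> borel_measurable M"
    and inj: "\<And>\<omega>. \<omega> \<in> space M \<Longrightarrow> inj_on (\<lambda>i. fA i \<omega>) {..<N}"
    and s: "\<And>\<omega>. \<omega> \<in> space M \<Longrightarrow> is_arg_max (\<lambda>i. fA i \<omega>) (\<lambda>i. i \<in> topK N K (\<lambda>i. fB i \<omega>)) (s \<omega>)"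
  shows "s \<in> measurable M (count_space {..<N})"
proof (rule measurable_count_space_by_preds)
  let ?Q = "\<lambda>i \<omega>. is_arg_max (\<lambda>i. fA i \<omega>) (\<lambda>i. i \<in> topK N K (\<lambda>i. fB i \<omega>)) i"
  show "s \<omega> \<in> {..<N}" if "\<omega> \<in> space M" for \<omega>
    using s[OF that] topK_subset_lessThan by (auto simp: is_arg_max_def)
  show "Measurable.pred M (?Q i)" if "i \<in> {..<N}" for i
  proof -
    have "?Q i = (\<lambda>\<omega>. i \<in> topK N K (\<lambda>i. fB i \<omega>) \<and>
        (\<forall>j\<in>{..<N}. j \<in> topK N K (\<lambda>i. fB i \<omega>) \<longrightarrow> fA j \<omega> \<le> fA i \<omega>))"
      using topK_subset_lessThan by (fastforce simp: is_arg_max_linorder)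
    moreover have "Measurable.pred M (\<lambda>\<omega>. i \<in> topK N K (\<lambda>i. fB i \<omega>) \<and>
        (\<forall>j\<in>{..<N}. j \<in> topK N K (\<lambda>i. fB i \<omega>) \<longrightarrow> fA j \<omega> \<le> fA i \<omega>))"
      using that fA fB by (intro pred_intros_finite pred_intros_logic pred_in_topK) auto
    ultimately show ?thesis by simp
  qed
  show "?Q i \<omega> \<longleftrightarrow> s \<omega> = i" if "\<omega> \<in> space M" "i \<in> {..<N}" for \<omega> i
    using s[OF that(1)] is_arg_max_unique[OF inj_on_subset[OF inj[OF that(1)] topK_subset_lessThan]]
    by auto
qed (rule countable_finite, simp)

lemma integrable_of_distr_eq:
  fixes X Y :: "'a \<Rightarrow> real"
  assumes "X \<in> borel_measurable M" "Y \<in> borel_measurable M"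
    and "distr M borel Y = distr M borel X" "integrable M X"
  shows "integrable M Y"
  using assms integrable_distr_eq[OF _ measurable_id, of _ M] by metis

lemma integrable_avg_Collect:
  assumes Y: "\<And>j. j < m \<Longrightarrow> integrable M (Y j)"
    and P: "\<And>j. j < m \<Longrightarrow> Measurable.pred M (P j)"
  shows "integrable M (\<lambda>\<omega>. avg {j. j < m \<and> P j \<omega>} (\<lambda>j. Y j \<omega>))"
proof (rule Bochner_Integration.integrable_bound)
  show "integrable M (\<lambda>\<omega>. \<Sum>j<m. \<bar>Y j \<omega>\<bar>)"
    using Y by (intro Bochner_Integration.integrable_sum Bochner_Integration.integrable_abs) simp
  show "(\<lambda>\<omega>. avg {j. j < m \<and> P j \<omega>} (\<lambda>j. Y j \<omega>)) \<in> borel_measurable M"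
    using Y P by (intro borel_measurable_avg_Collect) auto
  have "\<bar>avg {j. j < m \<and> P j \<omega>} (\<lambda>j. Y j \<omega>)\<bar> \<le> (\<Sum>j<m. \<bar>Y j \<omega>\<bar>)" for \<omega>
    by (rule avg_abs_le_sum_abs) auto
  then show "AE \<omega> in M. norm (avg {j. j < m \<and> P j \<omega>} (\<lambda>j. Y j \<omega>)) \<le> norm (\<Sum>j<m. \<bar>Y j \<omega>\<bar>)"
    by (intro AE_I2) (simp add: sum_nonneg)
qed

lemma integrable_Max_image:
  fixes f :: "'i \<Rightarrow> 'a \<Rightarrow> real"
  assumes "finite I" "I \<noteq> {}" "\<And>i. i \<in> I \<Longrightarrow> integrable M (f i)"
  shows "integrable M (\<lambda>\<omega>. Max ((\<lambda>i. f i \<omega>) ` I))"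
  using assms
proof (induction I rule: finite_ne_induct)
  case (insert i I)
  then have "integrable M (\<lambda>\<omega>. max (f i \<omega>) (Max ((\<lambda>i. f i \<omega>) ` I)))" by simp
  then show ?case using insert.hyps by simp
qed simp

lemma integrable_compose_finite:
  fixes f :: "'i \<Rightarrow> 'a \<Rightarrow> real"
  assumes I: "finite I" and f: "\<And>i. i \<in> I \<Longrightarrow> integrable M (f i)"
    and s: "s \<in> measurable M (count_space I)"
  shows "integrable M (\<lambda>\<omega>. f (s \<omega>) \<omega>)"
proof (rule Bochner_Integration.integrable_bound)
  show "integrable M (\<lambda>\<omega>. \<Sum>i\<in>I. \<bar>f i \<omega>\<bar>)"
    by (intro Bochner_Integration.integrable_sum Bochner_Integration.integrable_abs f)
  show "(\<lambda>\<omega>. f (s \<omega>) \<omega>) \<in> borel_measurable M"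
    by (rule measurable_compose_countable'[OF borel_measurable_integrable[OF f] s countable_finite[OF I]])
  have "\<bar>f (s \<omega>) \<omega>\<bar> \<le> (\<Sum>i\<in>I. \<bar>f i \<omega>\<bar>)" if "\<omega> \<in> space M" for \<omega>
    using measurable_space[OF s that] I by (intro member_le_sum) auto
  then show "AE \<omega> in M. norm (f (s \<omega>) \<omega>) \<le> norm (\<Sum>i\<in>I. \<bar>f i \<omega>\<bar>)"
    by (intro AE_I2) (simp add: sum_nonneg)
qed

lemma (in finite_measure) integral_less_iff_measure_neq:
  fixes f g :: "'a \<Rightarrow> real"
  assumes f: "integrable M f" and g: "integrable M g" and le: "AE x in M. f x \<le> g x"
  shows "integral\<^sup>L M f < integral\<^sup>L M g \<longleftrightarrow> measure M {x\<in>space M. f x \<noteq> g x} > 0"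
proof -
  have [measurable]: "f \<in> borel_measurable M" "g \<in> borel_measurable M" using f g by auto
  have "integral\<^sup>L M f < integral\<^sup>L M g \<longleftrightarrow> emeasure M {x\<in>space M. f x \<noteq> g x} \<noteq> 0"
  proof
    assume "integral\<^sup>L M f < integral\<^sup>L M g"
    then have "\<not> (AE x in M. f x = g x)" using integral_cong_AE[of f M g] by auto
    then show "emeasure M {x\<in>space M. f x \<noteq> g x} \<noteq> 0"
      by (subst (asm) AE_iff_measurable[OF _ refl]) auto
  next
    assume "emeasure M {x\<in>space M. f x \<noteq> g x} \<noteq> 0"
    then show "integral\<^sup>L M f < integral\<^sup>L M g"
      by (intro integral_less_AE[OF f g _ _ _ le]) auto
  qed
  then show ?thesis by (simp add: emeasure_eq_measure zero_less_measure_iff)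
qed

lemma min_neq_min_iff:
  fixes b c s :: real
  assumes "c \<le> b"
  shows "min c s \<noteq> min b s \<longleftrightarrow> (s > b \<and> b > c) \<or> (b \<ge> s \<and> s > c)"
  using assms by (auto simp: min_def)

lemma (in finite_measure) measure_Un_pos_iff:
  assumes "A \<in> sets M" "B \<in> sets M"
  shows "measure M (A \<union> B) > 0 \<longleftrightarrow> measure M A > 0 \<or> measure M B > 0"
proof -
  have "measure M A \<le> measure M (A \<union> B)" "measure M B \<le> measure M (A \<union> B)"
    using assms by (auto intro: finite_measure_mono)
  moreover have "measure M (A \<union> B) \<le> measure M A + measure M B"
    using assms by (rule measure_Un_le)
  ultimately show ?thesis using measure_nonneg[of M A] measure_nonneg[of M B] by linarith
qed

lemma (in finite_measure) integral_min_less_iff: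
  fixes b c s :: "'a \<Rightarrow> real"
  assumes int: "integrable M b" "integrable M c" "integrable M s"
    and le: "\<And>\<omega>. \<omega> \<in> space M \<Longrightarrow> c \<omega> \<le> b \<omega>"
  shows "integral\<^sup>L M (\<lambda>\<omega>. min (b \<omega>) (s \<omega>)) > integral\<^sup>L M (\<lambda>\<omega>. min (c \<omega>) (s \<omega>)) \<longleftrightarrow>
    measure M {\<omega>\<in>space M. s \<omega> > b \<omega> \<and> b \<omega> > c \<omega>} > 0 \<or>
    measure M {\<omega>\<in>space M. b \<omega> \<ge> s \<omega> \<and> s \<omega> > c \<omega>} > 0"
proof -
  have [measurable]: "b \<in> borel_measurable M" "c \<in> borel_measurable M" "s \<in> borel_measurable M"
    using int by auto
  have "{\<omega>\<in>space M. min (c \<omega>) (s \<omega>) \<noteq> min (b \<omega>) (s \<omega>)} =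
      {\<omega>\<in>space M. s \<omega> > b \<omega> \<and> b \<omega> > c \<omega>} \<union> {\<omega>\<in>space M. b \<omega> \<ge> s \<omega> \<and> s \<omega> > c \<omega>}"
    using le min_neq_min_iff by blast
  moreover have "AE \<omega> in M. min (c \<omega>) (s \<omega>) \<le> min (b \<omega>) (s \<omega>)"
    by (intro AE_I2 min.mono le order.refl)
  ultimately show ?thesis
    using integral_less_iff_measure_neq[of "\<lambda>\<omega>. min (c \<omega>) (s \<omega>)" "\<lambda>\<omega>. min (b \<omega>) (s \<omega>)"]
      measure_Un_pos_iff int by simp
qed

theorem theorem1:
  fixes M :: "'a measure" and N :: nat and n :: "nat \<Rightarrow> nat"
    and X :: "nat \<Rightarrow> 'a \<Rightarrow> real"
    and Y :: "nat \<Rightarrow> nat \<Rightarrow> 'a \<Rightarrow> real"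
    and inA :: "nat \<Rightarrow> nat \<Rightarrow> 'a \<Rightarrow> bool"
    and a :: "nat \<Rightarrow> 'a \<Rightarrow> nat" and astar :: "'a \<Rightarrow> nat"
    and muA muB mu :: "nat \<Rightarrow> 'a \<Rightarrow> real" and SE :: "'a \<Rightarrow> real"
  defines "muA \<equiv> \<lambda>i \<omega>. avg {j. j < n i \<and> inA i j \<omega>} (\<lambda>j. Y i j \<omega>)"
    and "muB \<equiv> \<lambda>i \<omega>. avg {j. j < n i \<and> \<not> inA i j \<omega>} (\<lambda>j. Y i j \<omega>)"
    and "mu \<equiv> \<lambda>i \<omega>. avg {..<n i} (\<lambda>j. Y i j \<omega>)"
    and "SE \<equiv> \<lambda>\<omega>. Max ((\<lambda>i. mu i \<omega>) ` {..<N})"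
  assumes P: "prob_space M"
    and N2: "N \<ge> 2"
    and indepX: "prob_space.indep_vars M (\<lambda>_::nat. borel) X {..<N}"
    and intX: "\<forall>i<N. integrable M (X i)"
    and indepY: "prob_space.indep_vars M (\<lambda>_::nat \<times> nat. borel) (\<lambda>(i, j). Y i j) (SIGMA i:{..<N}. {..<n i})"
    and distY: "\<forall>i<N. \<forall>j<n i. distr M borel (Y i j) = distr M borel (X i)"
    and split_meas: "\<forall>i<N. \<forall>j<n i. inA i j \<in> measurable M (count_space UNIV)"
    and nonempty: "\<forall>\<omega>\<in>space M. \<forall>i<N. (\<exists>j<n i. inA i j \<omega>) \<and> (\<exists>j<n i. \<not> inA i j \<omega>)"
    and distinct: "\<forall>\<omega>\<in>space M. inj_on (\<lambda>i. muA i \<omega>) {..<N} \<and> inj_on (\<lambda>i. muB i \<omega>) {..<N}"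
    and a_spec: "\<forall>\<omega>\<in>space M. \<forall>K. 1 \<le> K \<and> K \<le> N \<longrightarrow>
        a K \<omega> \<in> topK N K (\<lambda>i. muB i \<omega>) \<and>
        muA (a K \<omega>) \<omega> = Max ((\<lambda>i. muA i \<omega>) ` topK N K (\<lambda>i. muB i \<omega>))"
    and astar_spec: "\<forall>\<omega>\<in>space M. astar \<omega> < N \<and>
        muA (astar \<omega>) \<omega> = Max ((\<lambda>i. muA i \<omega>) ` {..<N})"
  shows "(\<forall>K. 1 \<le> K \<and> K < N \<longrightarrow>
      (integral\<^sup>L M (\<lambda>\<omega>. min (muB (a K \<omega>) \<omega>) (SE \<omega>))
         \<ge> integral\<^sup>L M (\<lambda>\<omega>. min (muB (a (K + 1) \<omega>) \<omega>) (SE \<omega>))) \<and>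
      ((integral\<^sup>L M (\<lambda>\<omega>. min (muB (a K \<omega>) \<omega>) (SE \<omega>))
         > integral\<^sup>L M (\<lambda>\<omega>. min (muB (a (K + 1) \<omega>) \<omega>) (SE \<omega>)))
       \<longleftrightarrow>
       (measure M {\<omega>\<in>space M. SE \<omega> > muB (a K \<omega>) \<omega> \<and>
                              muB (a K \<omega>) \<omega> > muB (a (K + 1) \<omega>) \<omega>} > 0 \<or>
        measure M {\<omega>\<in>space M. muB (a K \<omega>) \<omega> \<ge> SE \<omega> \<and>
                              SE \<omega> > muB (a (K + 1) \<omega>) \<omega>} > 0)))
    \<and> (\<forall>K. 1 \<le> K \<and> K \<le> N \<longrightarrow>
      integral\<^sup>L M (\<lambda>\<omega>. min (muB (a K \<omega>) \<omega>) (SE \<omega>))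
        \<ge> integral\<^sup>L M (\<lambda>\<omega>. min (muB (astar \<omega>) \<omega>) (SE \<omega>)))"
proof -
  interpret prob_space M by (rule P)
  have Y_int: "integrable M (Y i j)" if "i < N" "j < n i" for i j
  proof (rule integrable_of_distr_eq[where X = "X i"])
    show "Y i j \<in> borel_measurable M" using indepY that by (auto simp: indep_vars_def)
  qed (use intX distY that in auto)
  have muA_meas: "muA i \<in> borel_measurable M" if "i < N" for i
    unfolding muA_def using that Y_int split_meas by (intro borel_measurable_avg_Collect) auto
  have muB_int: "integrable M (muB i)" if "i < N" for i
    unfolding muB_def using that Y_int split_meas by (intro integrable_avg_Collect pred_intros_logic) auto
  have mu_int: "integrable M (mu i)" if "i < N" for i
    using integrable_avg_Collect[of "n i" M "Y i" "\<lambda>_ _. True"] that Y_int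
    unfolding mu_def lessThan_def by simp
  have SE_int: "integrable M SE"
    unfolding SE_def using N2 mu_int by (intro integrable_Max_image) (auto simp: lessThan_empty_iff)
  have injA: "inj_on (\<lambda>i. muA i \<omega>) {..<N}" if "\<omega> \<in> space M" for \<omega>
    using distinct that by auto
  have a_arg_max: "is_arg_max (\<lambda>i. muA i \<omega>) (\<lambda>i. i \<in> topK N K (\<lambda>i. muB i \<omega>)) (a K \<omega>)"
    if "\<omega> \<in> space M" "1 \<le> K" "K \<le> N" for \<omega> K
    using a_spec that by (simp add: is_arg_max_Max_iff finite_topK)
  have a_meas: "a K \<in> measurable M (count_space {..<N})" if "1 \<le> K" "K \<le> N" for K
  proof (rule measurable_topK_arg_max[where fA = muA and fB = muB])
    show "muB i \<in> borel_measurable M" if "i < N" for i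
      using muB_int[OF that] by (rule borel_measurable_integrable)
  qed (use muA_meas injA a_arg_max that in auto)
  have muB_a_int: "integrable M (\<lambda>\<omega>. muB (a K \<omega>) \<omega>)" if "1 \<le> K" "K \<le> N" for K
    by (rule integrable_compose_finite[OF _ muB_int a_meas[OF that]]) auto
  have muB_a_antimono: "muB (a L \<omega>) \<omega> \<le> muB (a K \<omega>) \<omega>"
    if "\<omega> \<in> space M" "1 \<le> K" "K \<le> L" "L \<le> N" for \<omega> K L
    using is_arg_max_topK_antimono[OF injA[OF that(1)] that(3) a_arg_max a_arg_max] that by auto
  have astar_eq: "astar \<omega> = a N \<omega>" if "\<omega> \<in> space M" for \<omega>
  proof (rule is_arg_max_unique[OF injA[OF that]])
    show "is_arg_max (\<lambda>i. muA i \<omega>) (\<lambda>i. i \<in> {..<N}) (astar \<omega>)"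
      using astar_spec that is_arg_max_Max_iff[of "{..<N}" "\<lambda>i. muA i \<omega>"] by simp
    show "is_arg_max (\<lambda>i. muA i \<omega>) (\<lambda>i. i \<in> {..<N}) (a N \<omega>)"
      using a_arg_max[OF that, of N] N2 by (simp add: topK_eq_lessThan)
  qed
  let ?E = "\<lambda>K. integral\<^sup>L M (\<lambda>\<omega>. min (muB (a K \<omega>) \<omega>) (SE \<omega>))"
  let ?P = "\<lambda>K. measure M {\<omega>\<in>space M. SE \<omega> > muB (a K \<omega>) \<omega> \<and>
    muB (a K \<omega>) \<omega> > muB (a (K + 1) \<omega>) \<omega>} > 0 \<or>
    measure M {\<omega>\<in>space M. muB (a K \<omega>) \<omega> \<ge> SE \<omega> \<and> SE \<omega> > muB (a (K + 1) \<omega>) \<omega>} > 0"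
  show ?thesis
  proof (intro conjI allI impI)
    fix K assume K: "1 \<le> K \<and> K < N"
    show "?E K \<ge> ?E (K + 1)"
      using K muB_a_int SE_int muB_a_antimono by (intro integral_mono min.mono) auto
    show "?E K > ?E (K + 1) \<longleftrightarrow> ?P K"
      using K muB_a_int SE_int muB_a_antimono by (intro integral_min_less_iff) auto
  next
    fix K assume K: "1 \<le> K \<and> K \<le> N"
    have "integral\<^sup>L M (\<lambda>\<omega>. min (muB (astar \<omega>) \<omega>) (SE \<omega>)) = ?E N"
      using astar_eq by (intro Bochner_Integration.integral_cong) auto
    also have "\<dots> \<le> ?E K"
      using K N2 muB_a_int SE_int muB_a_antimono by (intro integral_mono min.mono) auto
    finally show "?E K \<ge> integral\<^sup>L M (\<lambda>\<omega>. min (muB (astar \<omega>) \<omega>) (SE \<omega>))" .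
  qed
qed

end
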